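(* There exists no rectifying curve in $\mathbb{E}^n$ all of whose curvatures $\kappa_1,\dots,\kappa_{n-1}$ are non-zero constants.
   Context: For an arclength parameterized curve $\alpha$ in $\mathbb{E}^n$ that is $n$ times continuously differentiable, the Frenet frame $T,N,B_1,\dots,B_{n-2}$ is orthonormal and satisfies $T'=\kappa_1N$, $N'=-\kappa_1T+\kappa_2B_1$, $B_1'=-\kappa_2N+\kappa_3B_2$, $B_i'=-\kappa_{i+1}B_{i-1}+\kappa_{i+2}B_{i+1}$ for $i\in\{2,\dots,n-3\}$, $B_{n-2}'=-\kappa_{n-1}B_{n-3}$, where $\kappa_1,\dots,\kappa_{n-1}$ are the curvatures and $\kappa_1,\dots,\kappa_{n-2}>0$. A curve $\alpha$ is a rectifying curve if there is a fixed point $p$ such that for all $s$, $\langle\alpha(s)-p,N(s)\rangle=0$. *)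

theory Defs
  imports "HOL-Analysis.Analysis"
begin

text \<open>The frame is indexed by E 0 = T, E 1 = N, E (j+1) = B_j (j = 1..n-2);
  the curvatures are k 1, ..., k (n-1) (functions of the parameter s).
  The Frenet equations are written in the uniform form
  E_i' = - k_i E_(i-1) + k_(i+1) E_(i+1), with the terms k_0 and k_n absent,
  which is exactly the list T' = k1 N, N' = -k1 T + k2 B1, ..., B_(n-2)' = -k_(n-1) B_(n-3).
  Arclength parametrisation: alpha' = T with T a unit vector.\<close>

definition frenet_apparatus ::
  "(real \<Rightarrow> real^'n) \<Rightarrow> real set \<Rightarrow> (nat \<Rightarrow> real \<Rightarrow> real^'n) \<Rightarrow> (nat \<Rightarrow> real \<Rightarrow> real) \<Rightarrow> bool"
  where
  "frenet_apparatus \<alpha> I E k \<longleftrightarrow>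
     (\<forall>s\<in>I. (\<alpha> has_vector_derivative E 0 s) (at s)) \<and>
     (\<forall>s\<in>I. \<forall>i<CARD('n). \<forall>j<CARD('n). E i s \<bullet> E j s = (if i = j then 1 else 0)) \<and>
     (\<forall>s\<in>I. \<forall>i<CARD('n).
        (E i has_vector_derivative
           ((if i = 0 then 0 else - (k i s *\<^sub>R E (i - 1) s)) +
            (if i + 1 < CARD('n) then k (i + 1) s *\<^sub>R E (i + 1) s else 0))) (at s)) \<and>
     (\<forall>s\<in>I. \<forall>i\<in>{1..CARD('n) - 2}. k i s > 0)"

definition rectifying_curve ::
  "(real \<Rightarrow> real^'n) \<Rightarrow> real set \<Rightarrow> (real \<Rightarrow> real^'n) \<Rightarrow> bool"
  where
  "rectifying_curve \<alpha> I N \<longleftrightarrow> (\<exists>p. \<forall>s\<in>I. (\<alpha> s - p) \<bullet> N s = 0)"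

end

theory Submission imports Defs begin

text \<open>Write \<open>g\<^sub>i = \<langle>\<alpha> - p, E\<^sub>i\<rangle>\<close> for the coordinates of the position vector in the Frenet frame.
  The Frenet equations give \<open>g\<^sub>i' = \<delta>\<^sub>i\<^sub>0 - \<kappa>\<^sub>i g\<^sub>i\<^sub>-\<^sub>1 + \<kappa>\<^sub>i\<^sub>+\<^sub>1 g\<^sub>i\<^sub>+\<^sub>1\<close>, and by skew-symmetry of
  this system \<open>\<Sum>\<^sub>i g\<^sub>i g\<^sub>i' = g\<^sub>0\<close>. For a rectifying curve \<open>g\<^sub>1 = 0\<close>, so \<open>g\<^sub>0' = 1\<close>; if moreover
  all curvatures are constant, solving the equation for \<open>g\<^sub>i\<^sub>+\<^sub>1'\<close> for \<open>g\<^sub>i\<^sub>+\<^sub>2\<close> shows inductively that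
  every \<open>g\<^sub>i'\<close> is a constant \<open>d\<^sub>i\<close>, with \<open>d\<^sub>0 = 1\<close> and \<open>d\<^sub>2 = \<kappa>\<^sub>1/\<kappa>\<^sub>2 \<noteq> 0\<close>. Differentiating
  \<open>\<Sum>\<^sub>i d\<^sub>i g\<^sub>i = g\<^sub>0\<close> gives \<open>\<Sum>\<^sub>i d\<^sub>i\<^sup>2 = 1\<close>, contradicting \<open>d\<^sub>0\<^sup>2 + d\<^sub>2\<^sup>2 > 1\<close>.
  The argument is pointwise in the derivatives.\<close>

lemma sum_skew_tridiagonal_eq_0:
  fixes x c :: "nat \<Rightarrow> 'a::comm_ring"
  shows "(\<Sum>i<m. x i * ((if i = 0 then 0 else - (c i * x (i - 1))) +
                       (if i + 1 < m then c (i + 1) * x (i + 1) else 0))) = 0"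
proof (induction m)
  case 0
  show ?case by simp
next
  case (Suc m)
  have split_last: "(if i + 1 < Suc m then a else 0) =
      (if i + 1 < m then a else 0) + (if i + 1 = m then a else 0)" for i and a :: 'a
    by simp
  show ?case
    using Suc.IH by (cases m) (simp_all add: split_last sum.distrib algebra_simps)
qed

lemma has_real_derivative_inner:
  fixes f g :: "real \<Rightarrow> 'a::real_inner"
  assumes "(f has_vector_derivative f') (at s)" and "(g has_vector_derivative g') (at s)"
  shows "((\<lambda>s. f s \<bullet> g s) has_real_derivative f' \<bullet> g s + f s \<bullet> g') (at s)"
proof -
  have "(\<lambda>h. h * (f s \<bullet> g') + h * (f' \<bullet> g s)) = (*) (f' \<bullet> g s + f s \<bullet> g')"
    by (auto simp: fun_eq_iff algebra_simps)
  then show ?thesis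
    using has_derivative_inner[OF assms[unfolded has_vector_derivative_def]]
    by (simp add: has_field_derivative_def)
qed

lemma has_real_derivative_unique_on_open:
  assumes "(f has_real_derivative a) (at s)" and "(g has_real_derivative b) (at s)"
    and "open S" and "s \<in> S" and "\<And>t. t \<in> S \<Longrightarrow> f t = g t"
  shows "a = b"
  using assms by (metis DERIV_unique has_field_derivative_transform_within_open)

locale frenet_curve =
  fixes \<alpha> :: "real \<Rightarrow> real^'n"
    and I :: "real set"
    and E :: "nat \<Rightarrow> real \<Rightarrow> real^'n"
    and k :: "nat \<Rightarrow> real \<Rightarrow> real"
    and p :: "real^'n"
  assumes frenet_apparatus: "frenet_apparatus \<alpha> I E k"
begin

definition coord :: "nat \<Rightarrow> real \<Rightarrow> real"
  where "coord i s = (\<alpha> s - p) \<bullet> E i s"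

definition coord_deriv :: "nat \<Rightarrow> real \<Rightarrow> real"
  where "coord_deriv i s =
    (if i = 0 then 1 else - (k i s * coord (i - 1) s)) +
    (if i + 1 < CARD('n) then k (i + 1) s * coord (i + 1) s else 0)"

lemma has_real_derivative_coord:
  assumes "s \<in> I" and "i < CARD('n)"
  shows "(coord i has_real_derivative coord_deriv i s) (at s)"
proof -
  have tangent: "(\<alpha> has_vector_derivative E 0 s) (at s)"
    and orthonormal: "E 0 s \<bullet> E i s = (if i = 0 then 1 else 0)"
    and frenet_eq: "(E i has_vector_derivative
           (if i = 0 then 0 else - (k i s *\<^sub>R E (i - 1) s)) +
           (if i + 1 < CARD('n) then k (i + 1) s *\<^sub>R E (i + 1) s else 0)) (at s)"
    using frenet_apparatus assms unfolding frenet_apparatus_def by auto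
  have "((\<lambda>s. \<alpha> s - p) has_vector_derivative E 0 s) (at s)"
    using tangent by (auto intro!: derivative_eq_intros)
  from has_real_derivative_inner[OF this frenet_eq] show ?thesis
    using orthonormal
    by (auto simp: coord_def[abs_def] coord_deriv_def inner_add_right inner_minus_right)
qed

lemma sum_coord_coord_deriv: "(\<Sum>i<CARD('n). coord i s * coord_deriv i s) = coord 0 s"
proof -
  have "coord i s * coord_deriv i s = (if i = 0 then coord i s else 0) + coord i s *
      ((if i = 0 then 0 else - (k i s * coord (i - 1) s)) +
       (if i + 1 < CARD('n) then k (i + 1) s * coord (i + 1) s else 0))" for i
    by (simp add: coord_deriv_def algebra_simps)
  then have "(\<Sum>i<CARD('n). coord i s * coord_deriv i s) =
      (\<Sum>i<CARD('n). if i = 0 then coord i s else 0) +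
      (\<Sum>i<CARD('n). coord i s *
         ((if i = 0 then 0 else - (k i s * coord (i - 1) s)) +
          (if i + 1 < CARD('n) then k (i + 1) s * coord (i + 1) s else 0)))"
    by (simp add: sum.distrib)
  also have "\<dots> = coord 0 s"
    using sum_skew_tridiagonal_eq_0[of "\<lambda>i. coord i s" "\<lambda>i. k i s" "CARD('n)"] by simp
  finally show ?thesis .
qed

end

locale rectifying_constant_curvature_curve = frenet_curve \<alpha> I E k p
  for \<alpha> :: "real \<Rightarrow> real^'n" and I E k p +
  fixes c :: "nat \<Rightarrow> real"
  assumes dim: "CARD('n) \<ge> 3"
    and open_I: "open I"
    and rectifying: "\<And>s. s \<in> I \<Longrightarrow> coord 1 s = 0"
    and curvature_const: "\<And>i s. i \<in> {1..CARD('n) - 1} \<Longrightarrow> s \<in> I \<Longrightarrow> k i s = c i"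
    and curvature_nonzero: "\<And>i. i \<in> {1..CARD('n) - 1} \<Longrightarrow> c i \<noteq> 0"
begin

lemma coord_deriv_0: "s \<in> I \<Longrightarrow> coord_deriv 0 s = 1"
  using dim rectifying by (simp add: coord_deriv_def)

lemma coord_deriv_1: "s \<in> I \<Longrightarrow> coord_deriv 1 s = 0"
  using has_real_derivative_unique_on_open[OF has_real_derivative_coord DERIV_const open_I]
    rectifying dim by fastforce

lemma coord_Suc_Suc:
  assumes "s \<in> I" and "Suc (Suc i) < CARD('n)"
  shows "coord (Suc (Suc i)) s = (coord_deriv (Suc i) s + c (Suc i) * coord i s) / c (Suc (Suc i))"
  using assms curvature_const[of "Suc i" s] curvature_const[of "Suc (Suc i)" s]
    curvature_nonzero[of "Suc (Suc i)"]
  by (simp add: coord_deriv_def field_simps)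

lemma coord_deriv_Suc_Suc:
  assumes "s \<in> I" and "Suc (Suc i) < CARD('n)"
    and "\<And>t. t \<in> I \<Longrightarrow> coord_deriv (Suc i) t = d'"
  shows "coord_deriv (Suc (Suc i)) s = c (Suc i) * coord_deriv i s / c (Suc (Suc i))"
proof (rule has_real_derivative_unique_on_open[OF has_real_derivative_coord _ open_I])
  have "c (Suc (Suc i)) \<noteq> 0"
    using assms(2) curvature_nonzero by simp
  then show "((\<lambda>t. (d' + c (Suc i) * coord i t) / c (Suc (Suc i))) has_real_derivative
      c (Suc i) * coord_deriv i s / c (Suc (Suc i))) (at s)"
    using has_real_derivative_coord[of s i] assms(1,2) by (auto intro!: derivative_eq_intros)
qed (use assms coord_Suc_Suc in auto)

lemma coord_deriv_const: "i < CARD('n) \<Longrightarrow> \<exists>d. \<forall>s\<in>I. coord_deriv i s = d"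
proof (induction i rule: less_induct)
  case (less i)
  consider "i = 0" | "i = 1" | j where "i = Suc (Suc j)"
    by (metis One_nat_def not0_implies_Suc)
  then show ?case
  proof cases
    case 3
    obtain d where "\<forall>s\<in>I. coord_deriv j s = d"
      using less.IH[of j] less.prems 3 by auto
    moreover obtain d' where "\<forall>s\<in>I. coord_deriv (Suc j) s = d'"
      using less.IH[of "Suc j"] less.prems 3 by auto
    ultimately show ?thesis
      using coord_deriv_Suc_Suc[of _ j d'] less.prems 3 by auto
  qed (use coord_deriv_0 coord_deriv_1 in auto)
qed

lemma coord_deriv_2_nonzero: "s \<in> I \<Longrightarrow> coord_deriv 2 s \<noteq> 0"
  using coord_deriv_Suc_Suc[of s 0 0] coord_deriv_0 coord_deriv_1 dim curvature_nonzero[of 1]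
    curvature_nonzero[of 2]
  by (auto simp: numeral_2_eq_2)

lemma sum_coord_deriv_squares:
  assumes s0: "s0 \<in> I"
  shows "(\<Sum>i<CARD('n). (coord_deriv i s0)\<^sup>2) = 1"
proof -
  obtain d where d: "\<And>i s. i < CARD('n) \<Longrightarrow> s \<in> I \<Longrightarrow> coord_deriv i s = d i"
    using coord_deriv_const by metis
  have "(coord i has_real_derivative d i) (at s0)" if "i < CARD('n)" for i
    using has_real_derivative_coord[OF s0 that] d[OF that s0] by simp
  then have "((\<lambda>s. \<Sum>i<CARD('n). d i * coord i s) has_real_derivative
      (\<Sum>i<CARD('n). d i * d i)) (at s0)"
    by (auto intro!: derivative_eq_intros)
  moreover have "(\<Sum>i<CARD('n). d i * coord i s) = coord 0 s" if "s \<in> I" for s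
  proof -
    have "(\<Sum>i<CARD('n). d i * coord i s) = (\<Sum>i<CARD('n). coord i s * coord_deriv i s)"
      using d[OF _ that] by (intro sum.cong) auto
    then show ?thesis
      using sum_coord_coord_deriv by simp
  qed
  ultimately have "(\<Sum>i<CARD('n). d i * d i) = d 0"
    using has_real_derivative_unique_on_open[OF _ has_real_derivative_coord open_I s0] d s0 dim
    by force
  moreover have "(\<Sum>i<CARD('n). (coord_deriv i s0)\<^sup>2) = (\<Sum>i<CARD('n). d i * d i)"
    using d[OF _ s0] by (intro sum.cong) (auto simp: power2_eq_square)
  ultimately show ?thesis
    using d[OF _ s0] coord_deriv_0[OF s0] dim by simp
qed

lemma parameter_set_empty: "I = {}"
proof (rule ccontr)
  assume "I \<noteq> {}"
  then obtain s where s: "s \<in> I" by blast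
  have "(\<Sum>i\<in>{0, 2}. (coord_deriv i s)\<^sup>2) \<le> (\<Sum>i<CARD('n). (coord_deriv i s)\<^sup>2)"
    using dim by (intro sum_mono2) auto
  then show False
    using sum_coord_deriv_squares[OF s] coord_deriv_0[OF s] coord_deriv_2_nonzero[OF s] by simp
qed

end

theorem theorem4p2:
  fixes \<alpha> :: "real \<Rightarrow> real^'n"
    and I :: "real set"
    and E :: "nat \<Rightarrow> real \<Rightarrow> real^'n"
    and k :: "nat \<Rightarrow> real \<Rightarrow> real"
  assumes "CARD('n) \<ge> 3"
    and "open I" and "is_interval I" and "I \<noteq> {}"
    and "frenet_apparatus \<alpha> I E k"
    and "\<forall>i\<in>{1..CARD('n) - 1}. \<exists>c. c \<noteq> 0 \<and> (\<forall>s\<in>I. k i s = c)"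
  shows "\<not> rectifying_curve \<alpha> I (E 1)"
proof
  assume "rectifying_curve \<alpha> I (E 1)"
  then obtain p where p: "\<forall>s\<in>I. (\<alpha> s - p) \<bullet> E 1 s = 0"
    unfolding rectifying_curve_def by blast
  obtain c where c: "\<forall>i\<in>{1..CARD('n) - 1}. c i \<noteq> 0 \<and> (\<forall>s\<in>I. k i s = c i)"
    using bchoice[OF assms(6)] by blast
  have "frenet_curve \<alpha> I E k"
    using assms(5) by (rule frenet_curve.intro)
  then interpret rectifying_constant_curvature_curve \<alpha> I E k p c
    using assms p c by unfold_locales (auto simp: frenet_curve.coord_def)
  show False
    using parameter_set_empty assms(4) by contradiction
qed

end
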